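(* For every integer $r\ge0$, \[ \sum_{n=1}^{\infty}\frac{h_n^{(r)}}{n(n+1)\cdots(n+r)}=\frac{\pi^2}{6\,r!}, \] equivalently $\sum_{n=1}^{\infty}h_n^{(r)}B(r+1,n)=\pi^2/6$.
   Context: Hyperharmonic numbers: $h_n^{(0)}=1/n$ for $n\ge1$, and for $r\ge1$, $h_n^{(r)}=\sum_{j=1}^{n}h_j^{(r-1)}$. $B(x,y)=\int_0^1t^{x-1}(1-t)^{y-1}\,dt$ is the Beta function. *)

theory Defs
  imports "HOL-Analysis.Analysis"
begin

fun hyperharmonic :: "nat \<Rightarrow> nat \<Rightarrow> real" where
  "hyperharmonic 0 n = 1 / real n"
| "hyperharmonic (Suc r) n = (\<Sum>j=1..n. hyperharmonic r j)"

definition BetaInt :: "real \<Rightarrow> real \<Rightarrow> real" where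
  "BetaInt x y = integral {0..1} (\<lambda>t. t powr (x - 1) * (1 - t) powr (y - 1))"

end

theory Submission
  imports Defs
begin

(* Write D r n = (n+1)(n+2)...(n+r+1), the rising factorial
   pochhammer (n+1) (r+1), and S r = sum_{n>=0} h^(r)_{n+1} / D r n.
   For r = 0 the series is the Basel series sum 1/(n+1)^2 = pi^2/6.
   The induction step r -> r+1 is a summation by parts: the hyperharmonic
   numbers h^(r+1) are the partial sums of h^(r), and the weights 1/D r n
   have differences 1/D r n - 1/D r (n+1) = (r+1) / D (r+1) n.  Abel
   summation therefore gives
     (r+1) * (partial sum of S (r+1)) = (partial sum of S r) - h^(r+1)_N / D r N,
   and the boundary term tends to 0 because h^(r+1)_N <= N^r H_N and
   D r N >= (N+1)^(r+1), so it is at most H_N/(N+1).  Hence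
   S (r+1) = S r / (r+1), i.e. S r = pi^2 / (6 r!).
   Finally B(r+1, n+1) = r! / D r n by the Gamma-function formula for Beta,
   which turns the first series into the second. *)

definition rising_denom :: "nat \<Rightarrow> nat \<Rightarrow> real" where
  "rising_denom r n = pochhammer (real n + 1) (Suc r)"

lemma rising_denom_prod: "rising_denom r n = (\<Prod>k=0..r. real (n + 1 + k))"
  unfolding rising_denom_def by (simp add: pochhammer_Suc_prod add_ac)

lemma rising_denom_pos: "rising_denom r n > 0"
  unfolding rising_denom_def by (intro pochhammer_pos) simp

lemma rising_denom_Suc: "rising_denom (Suc r) n = rising_denom r n * real (n + 2 + r)"
  unfolding rising_denom_def by (subst pochhammer_rec') (simp add: add_ac)

lemma rising_denom_shift: "real (n + 1) * rising_denom r (Suc n) = rising_denom (Suc r) n"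
  unfolding rising_denom_def by (subst pochhammer_rec) (simp add: add_ac)

(* The weights 1/D r n have differences proportional to the next weights;
   this is what makes the summation by parts close up. *)
lemma rising_denom_inverse_diff:
  "1 / rising_denom r n - 1 / rising_denom r (Suc n) = real (r + 1) / rising_denom (Suc r) n"
proof -
  have D: "rising_denom r n > 0" "rising_denom r (Suc n) > 0" by (simp_all add: rising_denom_pos)
  have "1 / rising_denom r (Suc n) = real (n + 1) / rising_denom (Suc r) n"
    using D by (simp flip: rising_denom_shift)
  moreover have "1 / rising_denom r n = real (n + 2 + r) / rising_denom (Suc r) n"
    by (simp add: rising_denom_Suc)
  ultimately show ?thesis by (simp add: diff_divide_distrib [symmetric])
qed

(* Each of the r+1 factors is at least n+1. *)
lemma rising_denom_lower: "real (n + 1) ^ Suc r \<le> rising_denom r n"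
proof -
  have "(\<Prod>k=0..r. real (n + 1)) \<le> (\<Prod>k=0..r. real (n + 1 + k))"
    by (intro prod_mono) auto
  then show ?thesis by (simp add: rising_denom_prod)
qed

lemma abel_summation:
  fixes A a w :: "nat \<Rightarrow> real"
  assumes "A 0 = 0" and "\<And>n. A (Suc n) = A n + a (Suc n)"
  shows "(\<Sum>n<N. A (Suc n) * (w n - w (Suc n))) = (\<Sum>n<N. a (Suc n) * w n) - A N * w N"
  using assms by (induction N) (simp_all add: algebra_simps)

lemma hyperharmonic_nonneg: "hyperharmonic r n \<ge> 0"
  by (induction r arbitrary: n) (auto intro: sum_nonneg)

lemma hyperharmonic_Suc_Suc:
  "hyperharmonic (Suc r) (Suc n) = hyperharmonic (Suc r) n + hyperharmonic r (Suc n)"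
  by (simp add: sum.cl_ivl_Suc)

lemma hyperharmonic_one: "hyperharmonic 1 n = harm n"
  by (induction n) (simp_all add: harm_altdef harm_Suc sum.cl_ivl_Suc inverse_eq_divide)

(* Crude growth bound, enough to kill the boundary term. *)
lemma hyperharmonic_le: "hyperharmonic (Suc r) n \<le> real n ^ r * harm n"
proof (induction r arbitrary: n)
  case 0
  then show ?case by (simp add: hyperharmonic_one[simplified])
next
  case (Suc r)
  have "hyperharmonic (Suc (Suc r)) n = (\<Sum>j=1..n. hyperharmonic (Suc r) j)" by simp
  also have "\<dots> \<le> (\<Sum>j=1..n. real n ^ r * harm n)"
  proof (intro sum_mono)
    fix j assume j: "j \<in> {1..n}"
    have "hyperharmonic (Suc r) j \<le> real j ^ r * harm j" by (rule Suc.IH)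
    also have "\<dots> \<le> real n ^ r * harm n"
      using j by (intro mult_mono power_mono harm_mono) (auto simp: harm_nonneg)
    finally show "hyperharmonic (Suc r) j \<le> real n ^ r * harm n" .
  qed
  also have "\<dots> = real n ^ Suc r * harm n" by simp
  finally show ?case .
qed

(* H_N grows like ln N, hence H_N / (N+1) tends to 0. *)
lemma harm_over_Suc_tendsto_0: "(\<lambda>N. harm N / real (N + 1)) \<longlonglongrightarrow> (0::real)"
proof -
  obtain \<gamma> where \<gamma>: "(\<lambda>n. harm n - ln (real n)) \<longlonglongrightarrow> (\<gamma>::real)"
    using euler_mascheroni_convergent convergent_def by blast
  have "(\<lambda>N. (harm N - ln (real N)) * (1 / real (N + 1)) + ln (real N) / real (N + 1))
          \<longlonglongrightarrow> \<gamma> * 0 + 0"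
    by (intro tendsto_intros \<gamma>) real_asymp+
  then show ?thesis by (simp add: field_simps del: of_nat_Suc)
qed

lemma boundary_term_bound: "hyperharmonic (Suc r) N / rising_denom r N \<le> harm N / real (N + 1)"
proof -
  have D: "rising_denom r N > 0" by (rule rising_denom_pos)
  have "hyperharmonic (Suc r) N / rising_denom r N \<le> real N ^ r * harm N / rising_denom r N"
    using hyperharmonic_le D by (intro divide_right_mono) auto
  also have "\<dots> \<le> real N ^ r * harm N / real (N + 1) ^ Suc r"
    using rising_denom_lower[of N r] D
    by (intro divide_left_mono mult_nonneg_nonneg mult_pos_pos zero_less_power) (auto simp: harm_nonneg)
  also have "\<dots> \<le> real (N + 1) ^ r * harm N / real (N + 1) ^ Suc r"
    by (intro divide_right_mono mult_right_mono power_mono) (auto simp: harm_nonneg)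
  also have "\<dots> = harm N / real (N + 1)"
    by (simp add: field_simps del: of_nat_Suc)
  finally show ?thesis .
qed

lemma boundary_term_tendsto_0:
  "(\<lambda>N. hyperharmonic (Suc r) N / rising_denom r N) \<longlonglongrightarrow> 0"
proof (rule real_tendsto_sandwich[OF _ _ tendsto_const harm_over_Suc_tendsto_0])
  show "\<forall>\<^sub>F N in sequentially. 0 \<le> hyperharmonic (Suc r) N / rising_denom r N"
    by (intro always_eventually allI divide_nonneg_pos hyperharmonic_nonneg rising_denom_pos)
  show "\<forall>\<^sub>F N in sequentially. hyperharmonic (Suc r) N / rising_denom r N \<le> harm N / real (N + 1)"
    by (intro always_eventually allI boundary_term_bound)
qed

lemma partial_sums_recursion:
  "real (r + 1) * (\<Sum>n<N. hyperharmonic (Suc r) (Suc n) / rising_denom (Suc r) n)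
     = (\<Sum>n<N. hyperharmonic r (Suc n) / rising_denom r n)
       - hyperharmonic (Suc r) N / rising_denom r N"
proof -
  have "(\<Sum>n<N. hyperharmonic (Suc r) (Suc n) * (1 / rising_denom r n - 1 / rising_denom r (Suc n)))
        = (\<Sum>n<N. hyperharmonic r (Suc n) * (1 / rising_denom r n))
          - hyperharmonic (Suc r) N * (1 / rising_denom r N)"
    by (rule abel_summation) (simp_all only: hyperharmonic_Suc_Suc, simp)
  then show ?thesis
    by (simp add: rising_denom_inverse_diff sum_distrib_left mult_ac del: hyperharmonic.simps)
qed

lemma hyperharmonic_series:
  "(\<lambda>n. hyperharmonic r (Suc n) / rising_denom r n) sums (pi\<^sup>2 / (6 * fact r))"
proof (induction r)
  case 0
  have "(\<lambda>n. hyperharmonic 0 (Suc n) / rising_denom 0 n) = (\<lambda>n. 1 / (real (Suc n))\<^sup>2)"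
    by (simp add: rising_denom_prod power2_eq_square)
  then show ?case using inverse_squares_sums by simp
next
  case (Suc r)
  let ?S = "\<lambda>N. \<Sum>n<N. hyperharmonic r (Suc n) / rising_denom r n"
  have "(\<lambda>N. (?S N - hyperharmonic (Suc r) N / rising_denom r N) / real (r + 1))
          \<longlonglongrightarrow> (pi\<^sup>2 / (6 * fact r) - 0) / real (r + 1)"
    using Suc.IH boundary_term_tendsto_0[of r] unfolding sums_def by (intro tendsto_intros) auto
  moreover have "(\<lambda>N. (?S N - hyperharmonic (Suc r) N / rising_denom r N) / real (r + 1))
      = (\<lambda>N. \<Sum>n<N. hyperharmonic (Suc r) (Suc n) / rising_denom (Suc r) n)"
  proof
    fix N
    show "(?S N - hyperharmonic (Suc r) N / rising_denom r N) / real (r + 1)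
        = (\<Sum>n<N. hyperharmonic (Suc r) (Suc n) / rising_denom (Suc r) n)"
      unfolding partial_sums_recursion[of r N, symmetric] by (simp del: of_nat_Suc)
  qed
  moreover have "(pi\<^sup>2 / (6 * fact r) - 0) / real (r + 1) = pi\<^sup>2 / (6 * fact (Suc r))"
    by (simp add: field_simps)
  ultimately show ?case unfolding sums_def by (simp add: mult_ac del: hyperharmonic.simps)
qed

(* B(r+1, n+1) = Gamma(r+1) Gamma(n+1) / Gamma(n+r+2) = r! / D r n. *)
lemma BetaInt_eq: "BetaInt (real r + 1) (real (n + 1)) = fact r / rising_denom r n"
proof -
  have "BetaInt (real r + 1) (real (n + 1)) = Beta (real r + 1) (real n + 1)"
    unfolding BetaInt_def using has_integral_Beta_real[of "real r + 1" "real n + 1"]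
    by (auto intro: integral_unique)
  also have "\<dots> = Gamma (real r + 1) / (Gamma (real n + 1 + real (Suc r)) / Gamma (real n + 1))"
    by (simp add: Beta_def add_ac)
  also have "\<dots> = fact r / rising_denom r n"
  proof -
    have "Gamma (real r + 1) = fact r" "Gamma (real n + 1) = fact n"
      using Gamma_fact[of r] Gamma_fact[of n] by (simp_all add: add.commute)
    then show ?thesis
      unfolding rising_denom_def by (subst pochhammer_Gamma) (auto simp: nonpos_Ints_def)
  qed
  finally show ?thesis .
qed

theorem proposition6:
  fixes r :: nat
  shows "(\<lambda>n. hyperharmonic r (n + 1) / (\<Prod>k=0..r. real (n + 1 + k)))
           sums (pi\<^sup>2 / (6 * fact r))
       \<and> (\<lambda>n. hyperharmonic r (n + 1) * BetaInt (real r + 1) (real (n + 1)))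
           sums (pi\<^sup>2 / 6)"
proof
  show "(\<lambda>n. hyperharmonic r (n + 1) / (\<Prod>k=0..r. real (n + 1 + k))) sums (pi\<^sup>2 / (6 * fact r))"
    using hyperharmonic_series[of r] by (simp add: rising_denom_prod)
  have "(\<lambda>n. fact r * (hyperharmonic r (Suc n) / rising_denom r n)) sums (fact r * (pi\<^sup>2 / (6 * fact r)))"
    by (intro sums_mult hyperharmonic_series)
  moreover have "(\<lambda>n. hyperharmonic r (n + 1) * BetaInt (real r + 1) (real (n + 1)))
      = (\<lambda>n. fact r * (hyperharmonic r (Suc n) / rising_denom r n))"
    unfolding BetaInt_eq by (simp add: field_simps)
  ultimately show "(\<lambda>n. hyperharmonic r (n + 1) * BetaInt (real r + 1) (real (n + 1))) sums (pi\<^sup>2 / 6)"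
    by simp
qed

end
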